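(* Let $n\ge2$ and $(x_1,\dots,x_n)\in\mathbb R^n$ with $-1<x_1\le x_2\le\dots\le x_n$ and $\sum_{i=1}^nx_i=0$. Then $$\prod_{i=1}^n(1+x_i)\le1-\frac{n}{2(n-1)}x_1^2\le1-\frac{\sum_{i=1}^nx_i^2}{2(n-1)^2}.$$ *)

theory Defs
  imports Complex_Main
begin

end

theory Submission
  imports Defs "HOL-Analysis.Convex"
begin

text \<open>
  Put \<open>a = x\<^sub>1\<close>, the smallest of the numbers. The remaining \<open>n - 1\<close> numbers sum to \<open>-a\<close>, so by
  AM-GM their factors \<open>1 + x\<^sub>i\<close> multiply to at most \<open>(1 - a/(n-1))\<^bsup>n-1\<^esup>\<close>; a one-variable
  monotonicity argument bounds \<open>(1 + a)(1 - a/(n-1))\<^bsup>n-1\<^esup>\<close> by \<open>1 - n a\<^sup>2/(2(n-1))\<close>.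
  For the second inequality, the shifted numbers \<open>x\<^sub>i - a \<ge> 0\<close> satisfy
  \<open>\<Sum>(x\<^sub>i - a)\<^sup>2 \<le> (\<Sum>(x\<^sub>i - a))\<^sup>2 = n\<^sup>2a\<^sup>2\<close>, which gives \<open>\<Sum>x\<^sub>i\<^sup>2 \<le> n(n-1)a\<^sup>2\<close>.
\<close>

lemma prod_le_mean_power:
  fixes x :: "'a \<Rightarrow> real"
  assumes "finite S" "S \<noteq> {}" and nonneg: "\<And>i. i \<in> S \<Longrightarrow> 0 \<le> x i"
  shows "(\<Prod>i\<in>S. x i) \<le> ((\<Sum>i\<in>S. x i) / card S) ^ card S"
proof -
  have prod_nonneg: "0 \<le> (\<Prod>i\<in>S. x i)"
    using nonneg by (simp add: prod_nonneg)
  have card_pos: "card S > 0"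
    using assms(1,2) by (simp add: card_gt_0_iff)
  have "(\<Prod>i\<in>S. x i) powr (1 / card S) \<le> (\<Sum>i\<in>S. x i) / card S"
    using arith_geom_mean[OF assms] by (simp add: sum_divide_distrib)
  then have "((\<Prod>i\<in>S. x i) powr (1 / card S)) ^ card S \<le> ((\<Sum>i\<in>S. x i) / card S) ^ card S"
    by (rule power_mono) simp
  also have "((\<Prod>i\<in>S. x i) powr (1 / card S)) ^ card S = (\<Prod>i\<in>S. x i)"
    using prod_nonneg card_pos by (simp add: powr_realpow'[symmetric] powr_powr)
  finally show ?thesis .
qed

lemma sum_squares_le_square_sum:
  fixes x :: "'a \<Rightarrow> real"
  assumes "finite S" "\<And>i. i \<in> S \<Longrightarrow> 0 \<le> x i"
  shows "(\<Sum>i\<in>S. (x i)\<^sup>2) \<le> (\<Sum>i\<in>S. x i)\<^sup>2"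
  using assms
proof (induction S rule: finite_induct)
  case (insert j F)
  have "0 \<le> 2 * x j * (\<Sum>i\<in>F. x i)"
    using insert.prems by (simp add: sum_nonneg)
  moreover have "(\<Sum>i\<in>F. (x i)\<^sup>2) \<le> (\<Sum>i\<in>F. x i)\<^sup>2"
    using insert by simp
  ultimately show ?case
    using insert.hyps by (simp add: power2_sum)
qed simp

lemma sum_squares_le_of_zero_sum_lower_bound:
  fixes x :: "'a \<Rightarrow> real" and a :: real
  assumes "finite S" and zero_sum: "(\<Sum>i\<in>S. x i) = 0" and lower: "\<And>i. i \<in> S \<Longrightarrow> a \<le> x i"
  shows "(\<Sum>i\<in>S. (x i)\<^sup>2) \<le> card S * (real (card S) - 1) * a\<^sup>2"
proof -
  define y where "y i = x i - a" for i
  have sum_y: "(\<Sum>i\<in>S. y i) = - (card S * a)"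
    using zero_sum by (simp add: y_def sum_subtractf)
  have "(\<Sum>i\<in>S. (x i)\<^sup>2) = (\<Sum>i\<in>S. (y i)\<^sup>2) + 2 * a * (\<Sum>i\<in>S. y i) + card S * a\<^sup>2"
  proof -
    have "(x i)\<^sup>2 = (y i)\<^sup>2 + 2 * a * y i + a\<^sup>2" for i
      by (simp add: y_def power2_eq_square algebra_simps)
    then show ?thesis by (simp add: sum.distrib sum_distrib_left)
  qed
  also have "\<dots> \<le> (\<Sum>i\<in>S. y i)\<^sup>2 + 2 * a * (\<Sum>i\<in>S. y i) + card S * a\<^sup>2"
    using sum_squares_le_square_sum[of S y] assms by (simp add: y_def)
  also have "\<dots> = card S * (real (card S) - 1) * a\<^sup>2"
    unfolding sum_y by (simp add: power2_eq_square algebra_simps)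
  finally show ?thesis .
qed

lemma one_minus_mult_power_le:
  fixes b :: real and m :: nat
  assumes "0 \<le> b" "1 \<le> m"
  shows "(1 - b) * (1 + b / m) ^ m \<le> 1 - (m + 1) / (2 * m) * b\<^sup>2"
proof -
  define h where "h t = (1 - t) * (1 + t / m) ^ m + (m + 1) / (2 * m) * t\<^sup>2" for t :: real
  have "h b \<le> h 0"
  proof (rule DERIV_nonpos_imp_nonincreasing[OF \<open>0 \<le> b\<close>])
    fix t :: real
    assume "0 \<le> t" "t \<le> b"
    define q where "q = 1 + t / m"
    define p where "p = q ^ (m - 1)"
    have "1 \<le> p"
      using \<open>0 \<le> t\<close> by (simp add: p_def q_def one_le_power)
    have deriv: "(h has_real_derivative
            (1 - t) * (m * p * (1 / m)) - q ^ m + (m + 1) / (2 * m) * (2 * t)) (at t)"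
      unfolding h_def p_def q_def by (auto intro!: derivative_eq_intros)
    have "q ^ m = q * p"
      using \<open>1 \<le> m\<close> by (simp add: p_def power_eq_if)
    then have "(1 - t) * (m * p * (1 / m)) - q ^ m + (m + 1) / (2 * m) * (2 * t)
             = (1 - t - q) * p + (m + 1) / m * t"
      using \<open>1 \<le> m\<close> by (simp add: field_simps)
    also have "1 - t - q = - ((m + 1) / m * t)"
      using \<open>1 \<le> m\<close> by (simp add: q_def field_simps)
    also have "- ((m + 1) / m * t) * p + (m + 1) / m * t = (m + 1) / m * t * (1 - p)"
      by (simp add: right_diff_distrib)
    also have "\<dots> \<le> 0"
      using \<open>0 \<le> t\<close> \<open>1 \<le> p\<close> by (intro mult_nonneg_nonpos) auto
    finally show "\<exists>y. (h has_real_derivative y) (at t) \<and> y \<le> 0"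
      using deriv by blast
  qed
  then show ?thesis
    by (simp add: h_def)
qed
lemma prod_one_plus_le_of_zero_sum:
  fixes x :: "'a \<Rightarrow> real"
  assumes "finite S" "2 \<le> card S" "j \<in> S"
    and min: "\<And>i. i \<in> S \<Longrightarrow> x j \<le> x i"
    and "-1 < x j" and zero_sum: "(\<Sum>i\<in>S. x i) = 0"
  shows "(\<Prod>i\<in>S. 1 + x i) \<le> 1 - card S / (2 * (real (card S) - 1)) * (x j)\<^sup>2"
proof -
  define T where "T = S - {j}"
  define m where "m = card T"
  have "finite T" "card S = m + 1" "1 \<le> m"
    using assms(1-3) by (auto simp: T_def m_def)
  have "card S * x j \<le> (\<Sum>i\<in>S. x i)"
    using sum_mono[of S "\<lambda>_. x j" x] min by simp
  then have "x j \<le> 0"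
    using zero_sum \<open>card S = m + 1\<close> by (simp add: mult_le_0_iff)
  have "(\<Prod>i\<in>T. 1 + x i) \<le> ((\<Sum>i\<in>T. 1 + x i) / m) ^ m"
    unfolding m_def
  proof (rule prod_le_mean_power)
    show "0 \<le> 1 + x i" if "i \<in> T" for i
      using min[of i] that \<open>-1 < x j\<close> by (auto simp: T_def)
  qed (use \<open>finite T\<close> \<open>1 \<le> m\<close> m_def in auto)
  also have "(\<Sum>i\<in>T. 1 + x i) = m + (- x j)"
    using zero_sum assms(1,3) by (simp add: T_def m_def sum.distrib sum_diff1)
  also have "(m + (- x j)) / m = 1 + (- x j) / m"
    using \<open>1 \<le> m\<close> by (simp add: diff_divide_distrib)
  finally have "(\<Prod>i\<in>T. 1 + x i) \<le> (1 + (- x j) / m) ^ m" .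
  then have "(\<Prod>i\<in>S. 1 + x i) \<le> (1 - (- x j)) * (1 + (- x j) / m) ^ m"
    using assms(1,3,5) by (simp add: T_def prod.remove mult_left_mono)
  also have "\<dots> \<le> 1 - card S / (2 * (real (card S) - 1)) * (x j)\<^sup>2"
    using one_minus_mult_power_le[of "- x j" m] \<open>x j \<le> 0\<close> \<open>1 \<le> m\<close> \<open>card S = m + 1\<close>
    by simp
  finally show ?thesis .
qed

theorem lemmaA2:
  fixes n :: nat and x :: "nat \<Rightarrow> real"
  assumes "n \<ge> 2"
    and "-1 < x 1"
    and "\<And>i. 1 \<le> i \<Longrightarrow> i < n \<Longrightarrow> x i \<le> x (i + 1)"
    and "(\<Sum>i=1..n. x i) = 0"
  shows "(\<Prod>i=1..n. 1 + x i) \<le> 1 - real n / (2 * (real n - 1)) * (x 1)^2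
         \<and> 1 - real n / (2 * (real n - 1)) * (x 1)^2
           \<le> 1 - (\<Sum>i=1..n. (x i)^2) / (2 * (real n - 1)^2)"
proof -
  have min: "x 1 \<le> x j" if "j \<in> {1..n}" for j
  proof (rule lift_Suc_mono_le_ivl[of "{1..<n}"])
    show "x k \<le> x (Suc k)" if "k \<in> {1..<n}" for k
      using that assms(3) by simp
  qed (use that in auto)
  have first: "(\<Prod>i=1..n. 1 + x i) \<le> 1 - real n / (2 * (real n - 1)) * (x 1)\<^sup>2"
    using prod_one_plus_le_of_zero_sum[of "{1..n}" 1 x] min assms by simp
  have "(\<Sum>i=1..n. (x i)\<^sup>2) \<le> real n * (real n - 1) * (x 1)\<^sup>2"
    using sum_squares_le_of_zero_sum_lower_bound[of "{1..n}" x "x 1"] assms(4) min by simp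
  then have "(\<Sum>i=1..n. (x i)\<^sup>2) / (2 * (real n - 1)\<^sup>2)
      \<le> real n * (real n - 1) * (x 1)\<^sup>2 / (2 * (real n - 1)\<^sup>2)"
    by (intro divide_right_mono) auto
  also have "\<dots> = real n / (2 * (real n - 1)) * (x 1)\<^sup>2"
    using assms(1) by (simp add: power2_eq_square)
  finally show ?thesis
    using first by linarith
qed

end
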